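(* For each $n\ge1$ there is a bijection $\varphi$ from the set of plane trees with $n$ edges to $\mathfrak S_n(321)$ such that, for every such tree $T$ and $\pi=\varphi(T)$: (1) the number of young leaves of $T$ equals the number of indices $i\in\{1,\dots,n-1\}$ such that both $\pi_i$ and $\pi_{i+1}$ are weak excedances of $\pi$; (2) the number of old leaves of $T$ equals the number of weak excedances $\pi_i$ of $\pi$ that are not followed by another weak excedance (i.e. $i=n$, or $\pi_{i+1}$ is not a weak excedance).
   Context: A plane tree is a rooted tree in which the children of each vertex are linearly ordered. A leaf is a vertex with no children; the one-vertex tree has no leaves. A leaf is old if it is the leftmost child of its parent, young otherwise. $\mathfrak S_n(321)$ is the set of permutations $\pi=\pi_1\cdots\pi_n$ of $\{1,\dots,n\}$ having no indices $a<b<c$ with $\pi_a>\pi_b>\pi_c$. An entry $\pi_i$ is a weak excedance if $\pi_i\ge i$ and a deficiency if $\pi_i<i$. *)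

theory Defs
  imports "HOL-Combinatorics.Permutations"
begin

datatype ptree = Node "ptree list"

fun children :: "ptree \<Rightarrow> ptree list" where
  "children (Node ts) = ts"

fun edges :: "ptree \<Rightarrow> nat" where
  "edges (Node ts) = (\<Sum>t\<leftarrow>ts. Suc (edges t))"

text \<open>The root itself is never a leaf.\<close>
fun young_leaves :: "ptree \<Rightarrow> nat" where
  "young_leaves (Node ts) =
     length (filter (\<lambda>t. children t = []) (drop 1 ts)) + (\<Sum>t\<leftarrow>ts. young_leaves t)"

fun old_leaves :: "ptree \<Rightarrow> nat" where
  "old_leaves (Node ts) =
     (case ts of [] \<Rightarrow> 0 | t # _ \<Rightarrow> (if children t = [] then 1 else 0))
     + (\<Sum>t\<leftarrow>ts. old_leaves t)"

definition avoids321 :: "nat \<Rightarrow> (nat \<Rightarrow> nat) \<Rightarrow> bool" where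
  "avoids321 n p \<longleftrightarrow>
     \<not> (\<exists>a b c. 1 \<le> a \<and> a < b \<and> b < c \<and> c \<le> n \<and> p a > p b \<and> p b > p c)"

definition perms321 :: "nat \<Rightarrow> (nat \<Rightarrow> nat) set" where
  "perms321 n = {p. p permutes {1..n} \<and> avoids321 n p}"

definition weak_exc :: "(nat \<Rightarrow> nat) \<Rightarrow> nat \<Rightarrow> bool" where
  "weak_exc p i \<longleftrightarrow> p i \<ge> i"

end

theory Submission
  imports Defs
begin

text \<open>
  A plane tree with \<open>n\<close> edges is encoded, by peeling off the first child of the root, as a
  Motzkin path of length \<open>n - 1\<close> with two kinds of level steps. A 321-avoiding permutation
  is the union of two increasing subsequences, formed by its weak excedances and by its
  deficiencies, so it is determined by the set \<open>W\<close> of positions and the set \<open>V\<close> of values of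
  its weak excedances; the pairs \<open>(W, V)\<close> that occur are exactly those satisfying a ballot
  condition. Letting the \<open>k\<close>-th step of the path decide whether \<open>k + 2 \<in> W\<close> and whether
  \<open>k + 1 \<in> V\<close> turns the ballot condition into nonnegativity of the path. Under this
  correspondence the indicator word of \<open>W\<close> records the shape of the tree: young leaves become
  adjacent pairs of weak excedances, and old leaves become maximal runs of them.
\<close>

section \<open>Two-coloured Motzkin paths\<close>

datatype step = Up | Down | Level_both | Level_none

text \<open>Step \<open>k\<close> of a path puts position \<open>k + 2\<close> into \<open>W\<close> if it \<^emph>\<open>opens\<close>, and value \<open>k + 1\<close>
  into \<open>V\<close> if it \<^emph>\<open>closes\<close>.\<close>

fun opens :: "step \<Rightarrow> bool" where
  "opens Up = True" | "opens Level_both = True" | "opens Down = False" | "opens Level_none = False"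

fun closes :: "step \<Rightarrow> bool" where
  "closes Down = True" | "closes Level_both = True" | "closes Up = False" | "closes Level_none = False"

fun motzkin :: "nat \<Rightarrow> step list \<Rightarrow> nat \<Rightarrow> bool" where
  "motzkin h [] h' \<longleftrightarrow> h = h'"
| "motzkin h (Up # xs) h' \<longleftrightarrow> motzkin (Suc h) xs h'"
| "motzkin h (Down # xs) h' \<longleftrightarrow> 0 < h \<and> motzkin (h - 1) xs h'"
| "motzkin h (Level_both # xs) h' \<longleftrightarrow> motzkin h xs h'"
| "motzkin h (Level_none # xs) h' \<longleftrightarrow> motzkin h xs h'"

lemma motzkin_append: "motzkin h (xs @ ys) h'' \<longleftrightarrow> (\<exists>h'. motzkin h xs h' \<and> motzkin h' ys h'')"
proof (induction xs arbitrary: h)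
  case (Cons x xs) then show ?case by (cases x) auto
qed simp

lemma motzkin_end_unique: "motzkin h xs h' \<Longrightarrow> motzkin h xs h'' \<Longrightarrow> h' = h''"
proof (induction xs arbitrary: h)
  case (Cons x xs) then show ?case by (cases x) auto
qed simp

lemma motzkin_shift: "motzkin h xs h' \<Longrightarrow> motzkin (h + c) xs (h' + c)"
proof (induction xs arbitrary: h)
  case (Cons x xs)
  show ?case
  proof (cases x)
    case Up then show ?thesis using Cons.IH[of "Suc h"] Cons.prems by simp
  next
    case Down then show ?thesis using Cons.IH[of "h - 1"] Cons.prems by simp
  qed (use Cons in auto)
qed simp

lemma motzkin_split_last_Up:
  "motzkin 0 xs (Suc g) \<Longrightarrow> \<exists>ys zs. xs = ys @ Up # zs \<and> motzkin 0 ys g \<and> motzkin 0 zs 0"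
proof (induction "length xs" arbitrary: xs g rule: less_induct)
  case less
  obtain xs' x where xs: "xs = xs' @ [x]"
    using less.prems by (cases xs rule: rev_cases) auto
  then obtain h where h1: "motzkin 0 xs' h" and h2: "motzkin h [x] (Suc g)"
    using less.prems motzkin_append by blast
  have IH: "\<exists>ys zs. xs' = ys @ Up # zs \<and> motzkin 0 ys g \<and> motzkin 0 zs 0"
    if "motzkin 0 xs' (Suc g)" for g
    using less.hyps[of xs' g] that xs by simp
  consider "x = Up" | "x = Down" | "x = Level_both \<or> x = Level_none" by (cases x) auto
  then show ?case
  proof cases
    case 1
    then show ?thesis using xs h1 h2 by (intro exI[of _ xs'] exI[of _ "[]"]) auto
  next
    case 2
    then have "h = Suc (Suc g)" using h2 by (cases h) auto
    then obtain ys1 zs1 where a: "xs' = ys1 @ Up # zs1" "motzkin 0 ys1 (Suc g)" "motzkin 0 zs1 0"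
      using IH[of "Suc g"] h1 by auto
    then obtain ys zs2 where b: "ys1 = ys @ Up # zs2" "motzkin 0 ys g" "motzkin 0 zs2 0"
      using less.hyps[of ys1 g] xs by auto
    have "motzkin 1 zs1 1" using motzkin_shift[OF a(3), of 1] by simp
    then have "motzkin 0 (zs2 @ Up # zs1 @ [Down]) 0" using b(3) by (auto simp: motzkin_append)
    then show ?thesis using xs 2 a b
      by (intro exI[of _ ys] exI[of _ "zs2 @ Up # zs1 @ [Down]"]) auto
  next
    case 3
    then obtain ys zs where "xs' = ys @ Up # zs" "motzkin 0 ys g" "motzkin 0 zs 0"
      using IH[of g] h1 h2 by auto
    then show ?thesis using xs 3
      by (intro exI[of _ ys] exI[of _ "zs @ [x]"]) (auto simp: motzkin_append)
  qed
qed

lemma motzkin_Up_split_unique: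
  assumes split: "ys @ Up # zs = ys' @ Up # zs'"
    and "motzkin 0 ys 0" "motzkin 0 zs 0" "motzkin 0 ys' 0" "motzkin 0 zs' 0"
  shows "ys = ys' \<and> zs = zs'"
proof -
  have no_shorter: False
    if split: "ys @ Up # zs = ys' @ Up # zs'" and shorter: "length ys < length ys'"
      and "motzkin 0 ys 0" "motzkin 0 zs 0" "motzkin 0 ys' 0" for ys zs ys' zs'
  proof -
    define w where "w = take (length ys' - Suc (length ys)) zs"
    have "ys' = take (length ys') (ys @ Up # zs)" using split by simp
    also have "\<dots> = ys @ Up # w"
      using shorter by (simp add: w_def Suc_diff_Suc take_Cons')
    finally have "motzkin 0 (ys @ Up # w) 0" using that by simp
    then have "motzkin 1 w 0"
      using \<open>motzkin 0 ys 0\<close> motzkin_end_unique by (auto simp: motzkin_append)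
    moreover obtain h where "motzkin 0 w h"
      using \<open>motzkin 0 zs 0\<close> motzkin_append by (metis append_take_drop_id w_def)
    then have "motzkin 1 w (h + 1)" using motzkin_shift[of 0 w h 1] by simp
    ultimately show False using motzkin_end_unique by fastforce
  qed
  have "length ys = length ys'"
    using no_shorter[of ys zs ys' zs'] no_shorter[of ys' zs' ys zs] assms
    by (metis linorder_neqE_nat)
  then show ?thesis using split by auto
qed

lemma motzkin_iff_counts:
  "motzkin h xs h' \<longleftrightarrow>
    (\<forall>k\<le>length xs. length (filter closes (take k xs)) \<le> h + length (filter opens (take k xs))) \<and>
    h + length (filter opens xs) = h' + length (filter closes xs)"
proof (induction xs arbitrary: h)
  case (Cons x xs)
  have split_k: "(\<forall>k\<le>Suc n. Q k) \<longleftrightarrow> Q 0 \<and> (\<forall>k\<le>n. Q (Suc k))" for n and Q :: "nat \<Rightarrow> bool"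
    by (simp add: All_less_Suc2 flip: less_Suc_eq_le)
  show ?case
  proof (cases x)
    case Down
    then show ?thesis using Cons.IH[of "h - 1"] by (cases h) (auto simp: split_k)
  qed (use Cons.IH in \<open>auto simp: split_k\<close>)
qed simp

section \<open>Plane trees as Motzkin paths\<close>

fun tree_word :: "ptree \<Rightarrow> step list" where
  "tree_word (Node []) = []"
| "tree_word (Node [Node []]) = []"
| "tree_word (Node (Node [] # t # ts)) = tree_word (Node (t # ts)) @ [Level_both]"
| "tree_word (Node [Node (f # fs)]) = tree_word (Node (f # fs)) @ [Level_none]"
| "tree_word (Node (Node (f # fs) # t # ts)) =
     tree_word (Node (t # ts)) @ Up # tree_word (Node (f # fs)) @ [Down]"

lemma tree_word_motzkin:
  "1 \<le> edges T \<Longrightarrow> motzkin 0 (tree_word T) 0 \<and> Suc (length (tree_word T)) = edges T"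
proof (induction T rule: tree_word.induct)
  case (5 f fs t ts)
  then have "motzkin 1 (tree_word (Node (f # fs))) 1"
    using motzkin_shift[of 0 _ 0 1] by simp
  with 5 show ?case by (auto simp: motzkin_append)
qed (auto simp: motzkin_append)

lemma tree_word_inj:
  "1 \<le> edges T \<Longrightarrow> 1 \<le> edges T' \<Longrightarrow> tree_word T = tree_word T' \<Longrightarrow> T = T'"
proof (induction T arbitrary: T' rule: tree_word.induct)
  case 2
  then show ?case by (cases T' rule: tree_word.cases) auto
next
  case (3 t ts)
  show ?case
  proof (cases T' rule: tree_word.cases)
    case (3 t' ts')
    then show ?thesis using "3.IH"[of "Node (t' # ts')"] "3.prems" by simp
  qed (use "3.prems" in auto)
next
  case (4 f fs)
  show ?case
  proof (cases T' rule: tree_word.cases)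
    case (4 f' fs')
    then show ?thesis using "4.IH"[of "Node (f' # fs')"] "4.prems" by simp
  qed (use "4.prems" in auto)
next
  case (5 f fs t ts)
  show ?case
  proof (cases T' rule: tree_word.cases)
    case (5 f' fs' t' ts')
    let ?A = "tree_word (Node (t # ts))" and ?B = "tree_word (Node (f # fs))"
    let ?A' = "tree_word (Node (t' # ts'))" and ?B' = "tree_word (Node (f' # fs'))"
    have "?A @ Up # ?B = ?A' @ Up # ?B'"
      using "5.prems"(3) 5 by simp
    then have "?A = ?A' \<and> ?B = ?B'"
      by (rule motzkin_Up_split_unique) (auto simp: tree_word_motzkin)
    then show ?thesis
      using "5.IH"(1)[of "Node (t' # ts')"] "5.IH"(2)[of "Node (f' # fs')"] 5 by auto
  qed (use "5.prems" in auto)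
qed simp

lemma tree_word_surj:
  "motzkin 0 xs 0 \<Longrightarrow> \<exists>t ts. edges (Node (t # ts)) = Suc (length xs) \<and> tree_word (Node (t # ts)) = xs"
proof (induction "length xs" arbitrary: xs rule: less_induct)
  case less
  show ?case
  proof (cases xs rule: rev_cases)
    case Nil
    then show ?thesis by (intro exI[of _ "Node []"] exI[of _ "[]"]) simp
  next
    case (snoc xs' x)
    then obtain h where h1: "motzkin 0 xs' h" and h2: "motzkin h [x] 0"
      using less.prems motzkin_append by blast
    show ?thesis
    proof (cases x)
      case Up
      then show ?thesis using h2 by simp
    next
      case Level_both
      then obtain t ts where "edges (Node (t # ts)) = Suc (length xs')" "tree_word (Node (t # ts)) = xs'"
        using less.hyps[of xs'] h1 h2 snoc by auto
      then show ?thesis using snoc Level_both by (intro exI[of _ "Node []"] exI[of _ "t # ts"]) simp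
    next
      case Level_none
      then obtain t ts where "edges (Node (t # ts)) = Suc (length xs')" "tree_word (Node (t # ts)) = xs'"
        using less.hyps[of xs'] h1 h2 snoc by auto
      then show ?thesis using snoc Level_none by (intro exI[of _ "Node (t # ts)"] exI[of _ "[]"]) simp
    next
      case Down
      then have "h = 1" using h2 by (cases h) auto
      then obtain ys zs where split: "xs' = ys @ Up # zs" "motzkin 0 ys 0" "motzkin 0 zs 0"
        using motzkin_split_last_Up[of xs' 0] h1 by auto
      obtain t ts where "edges (Node (t # ts)) = Suc (length ys)" "tree_word (Node (t # ts)) = ys"
        using less.hyps[of ys] split snoc by auto
      moreover obtain f fs where
        "edges (Node (f # fs)) = Suc (length zs)" "tree_word (Node (f # fs)) = zs"
        using less.hyps[of zs] split snoc by auto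
      ultimately show ?thesis using snoc split Down
        by (intro exI[of _ "Node (f # fs)"] exI[of _ "t # ts"]) simp
    qed
  qed
qed

lemma bij_betw_tree_word:
  assumes "1 \<le> n"
  shows "bij_betw tree_word {T. edges T = n} {xs. length xs = n - 1 \<and> motzkin 0 xs 0}"
proof (rule bij_betw_imageI)
  show "inj_on tree_word {T. edges T = n}"
    using tree_word_inj assms by (auto intro: inj_onI)
  show "tree_word ` {T. edges T = n} = {xs. length xs = n - 1 \<and> motzkin 0 xs 0}"
    using tree_word_motzkin tree_word_surj assms by fastforce
qed

section \<open>Increasing bijections between finite sets of naturals\<close>

definition rank :: "nat set \<Rightarrow> nat \<Rightarrow> nat" where
  "rank S x = card {y \<in> S. y \<le> x}"

lemma strict_mono_on_rank: "finite S \<Longrightarrow> strict_mono_on S (rank S)"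
proof (rule strict_mono_onI)
  fix x y assume "finite S" "x \<in> S" "y \<in> S" "x < y"
  then have "{z \<in> S. z \<le> x} \<subseteq> {z \<in> S. z \<le> y}" "y \<in> {z \<in> S. z \<le> y} - {z \<in> S. z \<le> x}"
    by auto
  then have "{z \<in> S. z \<le> x} \<subset> {z \<in> S. z \<le> y}" by blast
  then show "rank S x < rank S y" unfolding rank_def using \<open>finite S\<close> by (simp add: psubset_card_mono)
qed

lemma bij_betw_rank:
  assumes "finite S"
  shows "bij_betw (rank S) S {1..card S}"
proof -
  have inj: "inj_on (rank S) S"
    using strict_mono_on_imp_inj_on[OF strict_mono_on_rank[OF assms]] .
  have "rank S ` S \<subseteq> {1..card S}"
  proof
    fix r assume "r \<in> rank S ` S"
    then obtain x where x: "x \<in> S" "r = rank S x" by blast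
    have "{y \<in> S. y \<le> x} \<noteq> {}" using x by auto
    then have "1 \<le> card {y \<in> S. y \<le> x}" using assms by (simp add: Suc_le_eq card_gt_0_iff)
    moreover have "card {y \<in> S. y \<le> x} \<le> card S" using assms by (intro card_mono) auto
    ultimately show "r \<in> {1..card S}" using x by (simp add: rank_def)
  qed
  moreover have "card (rank S ` S) = card {1..card S}" using inj by (simp add: card_image)
  ultimately have "rank S ` S = {1..card S}" by (intro card_subset_eq) auto
  then show ?thesis using inj by (simp add: bij_betw_def)
qed

lemma rank_image_strict_mono:
  assumes "strict_mono_on S f" "x \<in> S"
  shows "rank (f ` S) (f x) = rank S x"
proof -
  have "{z \<in> f ` S. z \<le> f x} = f ` {y \<in> S. y \<le> x}"
    using assms by (auto simp: strict_mono_on_less_eq)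
  moreover have "inj_on f {y \<in> S. y \<le> x}"
    using strict_mono_on_imp_inj_on[OF assms(1)] by (rule inj_on_subset) auto
  ultimately show ?thesis by (simp add: rank_def card_image)
qed

definition incr_map :: "nat set \<Rightarrow> nat set \<Rightarrow> nat \<Rightarrow> nat" where
  "incr_map S T x = inv_into T (rank T) (rank S x)"

lemma
  assumes "finite S" "finite T" "card S = card T"
  shows bij_betw_incr_map: "bij_betw (incr_map S T) S T"
    and rank_incr_map: "x \<in> S \<Longrightarrow> rank T (incr_map S T x) = rank S x"
    and strict_mono_on_incr_map: "strict_mono_on S (incr_map S T)"
proof -
  have "incr_map S T = inv_into T (rank T) \<circ> rank S" by (auto simp: incr_map_def)
  moreover have "bij_betw (inv_into T (rank T)) {1..card S} T"
    using bij_betw_inv_into[OF bij_betw_rank[OF assms(2)]] assms(3) by simp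
  ultimately show bij: "bij_betw (incr_map S T) S T"
    using bij_betw_trans[OF bij_betw_rank[OF assms(1)]] by simp
  show rank: "rank T (incr_map S T x) = rank S x" if "x \<in> S" for x
    using bij_betw_rank[OF assms(1)] bij_betw_rank[OF assms(2)] assms(3) that
    unfolding incr_map_def by (metis bij_betw_imp_surj_on f_inv_into_f imageI)
  show "strict_mono_on S (incr_map S T)"
  proof (rule strict_mono_onI)
    fix x y assume "x \<in> S" "y \<in> S" "x < y"
    then have "rank T (incr_map S T x) < rank T (incr_map S T y)"
      using rank strict_mono_onD[OF strict_mono_on_rank[OF assms(1)]] by simp
    moreover have "incr_map S T x \<in> T" "incr_map S T y \<in> T"
      using bij \<open>x \<in> S\<close> \<open>y \<in> S\<close> bij_betwE by blast+
    ultimately show "incr_map S T x < incr_map S T y"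
      using strict_mono_on_less[OF strict_mono_on_rank[OF assms(2)]] by blast
  qed
qed

lemma incr_map_unique:
  assumes "finite T" "strict_mono_on S f" "f ` S = T" "x \<in> S"
  shows "incr_map S T x = f x"
proof -
  have "rank T (f x) = rank S x" using rank_image_strict_mono[OF assms(2,4)] assms(3) by simp
  moreover have "inj_on (rank T) T" by (rule strict_mono_on_imp_inj_on[OF strict_mono_on_rank[OF assms(1)]])
  ultimately show ?thesis
    using assms(3,4) by (metis imageI incr_map_def inv_into_f_f)
qed

section \<open>321-avoiding permutations and their weak excedances\<close>

lemma avoids321_if_two_increasing:
  assumes "{1..n} \<subseteq> A \<union> B" "strict_mono_on A p" "strict_mono_on B p"
  shows "avoids321 n p"
  unfolding avoids321_def
proof clarify
  fix a b c assume "1 \<le> a" "a < b" "b < c" "c \<le> n" "p b < p a" "p c < p b"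
  moreover from this have "a \<in> A \<union> B" "b \<in> A \<union> B" "c \<in> A \<union> B"
    using assms(1) by (auto simp: subset_iff)
  ultimately show False
    using strict_mono_onD[OF assms(2)] strict_mono_onD[OF assms(3)]
    by (elim UnE) (meson less_trans less_asym)+
qed

text \<open>The only candidate for a 321-avoiding permutation whose weak excedances have positions \<open>W\<close>
  and values \<open>V\<close>.\<close>

definition perm_of_wex :: "nat \<Rightarrow> nat set \<Rightarrow> nat set \<Rightarrow> nat \<Rightarrow> nat" where
  "perm_of_wex n W V i =
     (if i \<in> W then incr_map W V i
      else if i \<in> {1..n} then incr_map ({1..n} - W) ({1..n} - V) i else i)"

lemma card_le_partition:
  assumes "W \<subseteq> {1..n}" "k \<le> n"
  shows "card {y \<in> W. y \<le> k} + card {y \<in> {1..n} - W. y \<le> k} = k"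
proof -
  have "{y \<in> W. y \<le> k} \<union> {y \<in> {1..n} - W. y \<le> k} = {1..k}" using assms by auto
  moreover have "card ({y \<in> W. y \<le> k} \<union> {y \<in> {1..n} - W. y \<le> k}) =
      card {y \<in> W. y \<le> k} + card {y \<in> {1..n} - W. y \<le> k}"
    using assms by (intro card_Un_disjoint) (auto intro: finite_subset)
  ultimately show ?thesis by simp
qed

context
  fixes n :: nat and W V :: "nat set"
  assumes W_sub: "W \<subseteq> {1..n}" and V_sub: "V \<subseteq> {1..n}" and card_eq: "card W = card V"
begin

private lemma finite_parts:
  "finite W" "finite V" "finite ({1..n} - W)" "finite ({1..n} - V)"
  "card ({1..n} - W) = card ({1..n} - V)"
  using W_sub V_sub card_eq by (auto simp: card_Diff_subset finite_subset)

private lemma perm_of_wex_eqs: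
  "i \<in> W \<Longrightarrow> perm_of_wex n W V i = incr_map W V i"
  "i \<in> {1..n} - W \<Longrightarrow> perm_of_wex n W V i = incr_map ({1..n} - W) ({1..n} - V) i"
  by (simp_all add: perm_of_wex_def)

lemma bij_betw_perm_of_wex: "bij_betw (perm_of_wex n W V) W V"
  using bij_betw_incr_map[OF finite_parts(1,2) card_eq] bij_betw_cong perm_of_wex_eqs(1) by blast

lemma bij_betw_perm_of_wex_compl: "bij_betw (perm_of_wex n W V) ({1..n} - W) ({1..n} - V)"
  using bij_betw_incr_map[OF finite_parts(3-5)] bij_betw_cong perm_of_wex_eqs(2) by blast

lemma strict_mono_on_perm_of_wex:
  "strict_mono_on W (perm_of_wex n W V)"
  "strict_mono_on ({1..n} - W) (perm_of_wex n W V)"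
  using strict_mono_on_incr_map[OF finite_parts(1,2) card_eq]
    strict_mono_on_incr_map[OF finite_parts(3-5)] perm_of_wex_eqs
  by (auto simp: strict_mono_on_def)

lemma perm_of_wex_permutes: "perm_of_wex n W V permutes {1..n}"
proof (rule bij_imp_permutes)
  have "bij_betw (perm_of_wex n W V) (W \<union> ({1..n} - W)) (V \<union> ({1..n} - V))"
    by (rule bij_betw_combine[OF bij_betw_perm_of_wex bij_betw_perm_of_wex_compl]) auto
  moreover have "W \<union> ({1..n} - W) = {1..n}" "V \<union> ({1..n} - V) = {1..n}" using W_sub V_sub by auto
  ultimately show "bij_betw (perm_of_wex n W V) {1..n} {1..n}" by simp
  show "perm_of_wex n W V x = x" if "x \<notin> {1..n}" for x
    using that W_sub by (auto simp: perm_of_wex_def)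
qed

lemma avoids321_perm_of_wex: "avoids321 n (perm_of_wex n W V)"
  by (rule avoids321_if_two_increasing[OF _ strict_mono_on_perm_of_wex]) auto

context
  assumes ballot: "\<And>m. m < n \<Longrightarrow> card {v \<in> V. v \<le> m} < card {w \<in> W. w \<le> Suc m}"
begin

lemma perm_of_wex_ge:
  assumes i: "i \<in> W"
  shows "i \<le> perm_of_wex n W V i"
proof (rule ccontr)
  let ?v = "perm_of_wex n W V i"
  assume "\<not> i \<le> ?v"
  then have "?v < n" using i W_sub by auto
  then have "card {v \<in> V. v \<le> ?v} < card {w \<in> W. w \<le> Suc ?v}" by (rule ballot)
  also have "\<dots> \<le> card {w \<in> W. w \<le> i}"
    using \<open>\<not> i \<le> ?v\<close> finite_parts(1) by (intro card_mono) auto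
  finally have "rank V ?v < rank W i" unfolding rank_def .
  then show False
    using rank_incr_map[OF finite_parts(1,2) card_eq i] perm_of_wex_eqs(1)[OF i] by simp
qed

lemma perm_of_wex_less:
  assumes i: "i \<in> {1..n} - W"
  shows "perm_of_wex n W V i < i"
proof (rule ccontr)
  \<comment> \<open>If \<open>i\<close> were sent to some \<open>u \<ge> i\<close>, fewer than \<open>rank D i\<close> elements of \<open>U\<close> would lie below
    \<open>i\<close>, so too many elements of \<open>V\<close> would, against the ballot inequality at \<open>i - 1\<close>.\<close>
  let ?u = "perm_of_wex n W V i"
  let ?D = "{1..n} - W" and ?U = "{1..n} - V"
  assume "\<not> ?u < i"
  have u: "?u \<in> ?U" using bij_betw_perm_of_wex_compl i bij_betwE by blast
  have rank_u: "rank ?U ?u = rank ?D i"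
    using rank_incr_map[OF finite_parts(3-5) i] perm_of_wex_eqs(2)[OF i] by simp
  have i_range: "1 \<le> i" "i \<le> n" using i by auto
  have ballot_i: "card {v \<in> V. v \<le> i - 1} < card {w \<in> W. w \<le> i}"
    using ballot[of "i - 1"] i_range by simp
  have part_W: "card {w \<in> W. w \<le> i} + card {y \<in> ?D. y \<le> i} = i"
    using card_le_partition[OF W_sub i_range(2)] .
  have part_V: "card {v \<in> V. v \<le> i - 1} + card {y \<in> ?U. y \<le> i - 1} = i - 1"
    using card_le_partition[OF V_sub, of "i - 1"] i_range by simp
  have "{y \<in> ?U. y \<le> i - 1} \<subseteq> {y \<in> ?U. y \<le> ?u} - {?u}"
    using \<open>\<not> ?u < i\<close> i_range by auto
  then have "card {y \<in> ?U. y \<le> i - 1} \<le> card ({y \<in> ?U. y \<le> ?u} - {?u})"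
    using finite_parts(4) by (intro card_mono) auto
  also have "\<dots> = rank ?D i - 1"
    using u finite_parts(4) rank_u unfolding rank_def by (subst card_Diff_singleton) auto
  finally have "card {y \<in> ?U. y \<le> i - 1} \<le> card {y \<in> ?D. y \<le> i} - 1"
    unfolding rank_def .
  moreover have "1 \<le> card {y \<in> ?D. y \<le> i}"
    using card_mono[of "{y \<in> ?D. y \<le> i}" "{i}"] i finite_parts(3) by auto
  ultimately show False using ballot_i part_W part_V i_range by linarith
qed

lemma weak_exc_perm_of_wex_iff: "i \<in> {1..n} \<Longrightarrow> weak_exc (perm_of_wex n W V) i \<longleftrightarrow> i \<in> W"
  using perm_of_wex_ge perm_of_wex_less unfolding weak_exc_def by force

end

end

text \<open>Positions and values of the weak excedances of a permutation of \<open>{1..n}\<close>; the last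
  condition is the ballot condition characterising them.\<close>

definition wex_pairs :: "nat \<Rightarrow> (nat set \<times> nat set) set" where
  "wex_pairs n = {(W, V). W \<subseteq> {1..n} \<and> V \<subseteq> {1..n} \<and> card W = card V \<and>
     (\<forall>m<n. card {v \<in> V. v \<le> m} < card {w \<in> W. w \<le> Suc m})}"

lemma wex_pairs_endpoints:
  assumes "(W, V) \<in> wex_pairs n" "1 \<le> n"
  shows "1 \<in> W" "n \<in> V"
proof -
  have W: "W \<subseteq> {1..n}" and V: "V \<subseteq> {1..n}" and card: "card W = card V"
    and ballot: "\<And>m. m < n \<Longrightarrow> card {v \<in> V. v \<le> m} < card {w \<in> W. w \<le> Suc m}"
    using assms(1) by (auto simp: wex_pairs_def)
  have "0 < card {w \<in> W. w \<le> 1}" using ballot[of 0] assms(2) by simp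
  then have "{w \<in> W. w \<le> 1} \<noteq> {}" using card_gt_0_iff by blast
  then show "1 \<in> W" using W by (auto simp: subset_iff)
  have "{w \<in> W. w \<le> n} = W" using W by auto
  then have "card {v \<in> V. v \<le> n - 1} < card V" using ballot[of "n - 1"] assms(2) card by simp
  then have "{v \<in> V. v \<le> n - 1} \<noteq> V" by (intro notI) simp
  then obtain v where "v \<in> V" "\<not> v \<le> n - 1" by blast
  moreover have "v \<le> n" using V \<open>v \<in> V\<close> by auto
  ultimately have "v = n" by arith
  then show "n \<in> V" using \<open>v \<in> V\<close> by simp
qed

definition wex_set :: "(nat \<Rightarrow> nat) \<Rightarrow> nat \<Rightarrow> nat set" where
  "wex_set p n = {i \<in> {1..n}. weak_exc p i}"

lemma card_permutes_preimage:
  assumes "p permutes S"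
  shows "card {x \<in> S. p x \<in> A} = card (A \<inter> S)"
proof -
  have "p ` {x \<in> S. p x \<in> A} = A \<inter> S"
  proof (intro equalityI subsetI)
    fix y assume y: "y \<in> A \<inter> S"
    have "p (inv p y) = y" using permutes_inverses(1)[OF assms] .
    moreover have "inv p y \<in> S" using y permutes_in_image[OF permutes_inv[OF assms]] by simp
    ultimately show "y \<in> p ` {x \<in> S. p x \<in> A}" using y by (intro image_eqI[of _ _ "inv p y"]) auto
  qed (auto simp: permutes_in_image[OF assms])
  moreover have "inj_on p {x \<in> S. p x \<in> A}"
    using permutes_inj_on[OF assms] .
  ultimately show ?thesis by (metis card_image)
qed

lemma wex_pair_of_permutes:
  assumes p: "p permutes {1..n}"
  shows "(wex_set p n, p ` wex_set p n) \<in> wex_pairs n"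
proof -
  let ?W = "wex_set p n" and ?D = "{1..n} - wex_set p n"
  have W_sub: "?W \<subseteq> {1..n}" by (auto simp: wex_set_def)
  have inj: "inj_on p ?W" using permutes_inj_on[OF p] .
  have "card {v \<in> p ` ?W. v \<le> m} < card {w \<in> ?W. w \<le> Suc m}" if m: "m < n" for m
  proof -
    have "{v \<in> p ` ?W. v \<le> m} = p ` {i \<in> ?W. p i \<le> m}" by auto
    moreover have "inj_on p {i \<in> ?W. p i \<le> m}" using inj by (rule inj_on_subset) auto
    ultimately have V_le: "card {v \<in> p ` ?W. v \<le> m} = card {i \<in> ?W. p i \<le> m}"
      by (simp add: card_image)
    have "card {i \<in> {1..n}. p i \<in> {..m}} = card ({..m} \<inter> {1..n})"
      by (rule card_permutes_preimage[OF p])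
    also have "{..m} \<inter> {1..n} = {1..m}" using m by auto
    finally have preimage: "card {i \<in> {1..n}. p i \<in> {..m}} = m" by simp
    \<comment> \<open>Weak excedances with value at most \<open>m\<close> and deficiencies up to \<open>m + 1\<close> are disjoint
      sets of positions with values in \<open>{1..m}\<close>.\<close>
    have "{i \<in> ?W. p i \<le> m} \<union> {y \<in> ?D. y \<le> Suc m} \<subseteq> {i \<in> {1..n}. p i \<in> {..m}}"
      by (auto simp: wex_set_def weak_exc_def)
    then have "card ({i \<in> ?W. p i \<le> m} \<union> {y \<in> ?D. y \<le> Suc m}) \<le> m"
      using preimage card_mono[of "{i \<in> {1..n}. p i \<in> {..m}}"] by simp
    moreover have "card ({i \<in> ?W. p i \<le> m} \<union> {y \<in> ?D. y \<le> Suc m}) =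
        card {i \<in> ?W. p i \<le> m} + card {y \<in> ?D. y \<le> Suc m}"
      by (rule card_Un_disjoint) (auto simp: wex_set_def)
    moreover have "card {w \<in> ?W. w \<le> Suc m} + card {y \<in> ?D. y \<le> Suc m} = Suc m"
      using card_le_partition[OF W_sub, of "Suc m"] m by simp
    ultimately show ?thesis using V_le by linarith
  qed
  moreover have "p ` ?W \<subseteq> {1..n}" using W_sub permutes_image[OF p] by auto
  ultimately show ?thesis using W_sub inj by (simp add: wex_pairs_def card_image)
qed

lemma avoids321_increasing_on_wex_set:
  assumes p: "p permutes {1..n}" and av: "avoids321 n p"
  shows "strict_mono_on (wex_set p n) p"
proof (rule strict_mono_onI)
  fix i j assume i: "i \<in> wex_set p n" and j: "j \<in> wex_set p n" and "i < j"
  show "p i < p j"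
  proof (rule ccontr)
    assume "\<not> p i < p j"
    moreover have "p i \<noteq> p j" using \<open>i < j\<close> permutes_inj[OF p] by (metis inj_eq less_irrefl)
    ultimately have "p j < p i" by simp
    \<comment> \<open>The \<open>p j - 1\<close> positions with values below \<open>p j\<close> do not fit into \<open>{1..j} - {i, j}\<close>,
      as \<open>j \<le> p j\<close>; one of them lies beyond \<open>j\<close> and completes a 321 pattern.\<close>
    let ?P = "{m \<in> {1..n}. p m \<in> {..<p j}}"
    have "p j \<in> {1..n}" using j permutes_in_image[OF p] by (simp add: wex_set_def)
    then have "{..<p j} \<inter> {1..n} = {1..<p j}" by auto
    then have card_P: "card ?P = p j - 1" using card_permutes_preimage[OF p, of "{..<p j}"] by simp
    have "\<not> ?P \<subseteq> {1..j} - {i, j}"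
    proof
      assume "?P \<subseteq> {1..j} - {i, j}"
      then have "card ?P \<le> card ({1..j} - {i, j})" by (intro card_mono) auto
      also have "\<dots> = j - 2" using i \<open>i < j\<close> by (subst card_Diff_subset) (auto simp: wex_set_def)
      finally show False using card_P i j \<open>i < j\<close> by (auto simp: wex_set_def weak_exc_def)
    qed
    then obtain m where "m \<in> ?P" "m \<notin> {1..j} - {i, j}" by blast
    then have "1 \<le> i \<and> i < j \<and> j < m \<and> m \<le> n \<and> p j < p i \<and> p m < p j"
      using i \<open>i < j\<close> \<open>p j < p i\<close> by (auto simp: wex_set_def)
    then show False using av unfolding avoids321_def by blast
  qed
qed

lemma avoids321_increasing_on_deficiencies:
  assumes p: "p permutes {1..n}" and av: "avoids321 n p"
  shows "strict_mono_on ({1..n} - wex_set p n) p"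
proof (rule strict_mono_onI)
  fix i j assume i: "i \<in> {1..n} - wex_set p n" and j: "j \<in> {1..n} - wex_set p n" and "i < j"
  show "p i < p j"
  proof (rule ccontr)
    assume "\<not> p i < p j"
    moreover have "p i \<noteq> p j" using \<open>i < j\<close> permutes_inj[OF p] by (metis inj_eq less_irrefl)
    ultimately have "p j < p i" by simp
    \<comment> \<open>Symmetrically, one of the \<open>n - p i\<close> positions with values above \<open>p i\<close> lies before \<open>i\<close>.\<close>
    let ?Q = "{m \<in> {1..n}. p m \<in> {p i<..}}"
    have "p i \<in> {1..n}" using i permutes_in_image[OF p] by simp
    then have "{p i<..} \<inter> {1..n} = {p i<..n}" by auto
    then have card_Q: "card ?Q = n - p i" using card_permutes_preimage[OF p, of "{p i<..}"] by simp
    have "\<not> ?Q \<subseteq> {i..n} - {i, j}"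
    proof
      assume "?Q \<subseteq> {i..n} - {i, j}"
      then have "card ?Q \<le> card ({i..n} - {i, j})" by (intro card_mono) auto
      also have "\<dots> = Suc n - i - 2" using i j \<open>i < j\<close> by (subst card_Diff_subset) auto
      finally show False using card_Q i j \<open>i < j\<close> by (auto simp: wex_set_def weak_exc_def)
    qed
    then obtain m where "m \<in> ?Q" "m \<notin> {i..n} - {i, j}" by blast
    then have "1 \<le> m \<and> m < i \<and> i < j \<and> j \<le> n \<and> p i < p m \<and> p j < p i"
      using j \<open>i < j\<close> \<open>p j < p i\<close> by auto
    then show False using av unfolding avoids321_def by blast
  qed
qed

lemma perm_of_wex_wex_set:
  assumes p: "p permutes {1..n}" and av: "avoids321 n p"
  shows "perm_of_wex n (wex_set p n) (p ` wex_set p n) = p"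
proof
  fix i
  let ?W = "wex_set p n"
  have "p ` ({1..n} - ?W) = {1..n} - p ` ?W"
    using permutes_image[OF p] image_set_diff[OF permutes_inj[OF p]] by simp
  then have "p i = incr_map ({1..n} - ?W) ({1..n} - p ` ?W) i" if "i \<in> {1..n} - ?W"
    using incr_map_unique[OF _ avoids321_increasing_on_deficiencies[OF p av]] that by simp
  moreover have "p i = incr_map ?W (p ` ?W) i" if "i \<in> ?W"
    using incr_map_unique[OF _ avoids321_increasing_on_wex_set[OF p av]] that
    by (simp add: wex_set_def)
  moreover have "p i = i" if "i \<notin> {1..n}"
    using permutes_not_in[OF p that] .
  ultimately show "perm_of_wex n ?W (p ` ?W) i = p i"
    by (auto simp: perm_of_wex_def wex_set_def)
qed

lemma
  assumes "(W, V) \<in> wex_pairs n"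
  shows wex_set_perm_of_wex: "wex_set (perm_of_wex n W V) n = W"
    and perm_of_wex_image: "perm_of_wex n W V ` W = V"
proof -
  have W: "W \<subseteq> {1..n}" and V: "V \<subseteq> {1..n}" and card: "card W = card V"
    and ballot: "\<And>m. m < n \<Longrightarrow> card {v \<in> V. v \<le> m} < card {w \<in> W. w \<le> Suc m}"
    using assms by (auto simp: wex_pairs_def)
  show "wex_set (perm_of_wex n W V) n = W"
    using weak_exc_perm_of_wex_iff[OF W V card ballot] W by (auto simp: wex_set_def)
  show "perm_of_wex n W V ` W = V"
    using bij_betw_perm_of_wex[OF W V card] by (simp add: bij_betw_def)
qed

lemma bij_betw_perm_of_wex_pairs:
  "bij_betw (\<lambda>(W, V). perm_of_wex n W V) (wex_pairs n) (perms321 n)"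
proof (rule bij_betw_byWitness[where f' = "\<lambda>p. (wex_set p n, p ` wex_set p n)"])
  show "\<forall>WV \<in> wex_pairs n. (\<lambda>p. (wex_set p n, p ` wex_set p n)) ((\<lambda>(W, V). perm_of_wex n W V) WV) = WV"
    by (clarsimp simp: wex_set_perm_of_wex perm_of_wex_image)
  show "\<forall>p \<in> perms321 n. (\<lambda>(W, V). perm_of_wex n W V) (wex_set p n, p ` wex_set p n) = p"
    using perm_of_wex_wex_set by (auto simp: perms321_def)
  show "(\<lambda>(W, V). perm_of_wex n W V) ` wex_pairs n \<subseteq> perms321 n"
    using perm_of_wex_permutes avoids321_perm_of_wex by (auto simp: wex_pairs_def perms321_def)
  show "(\<lambda>p. (wex_set p n, p ` wex_set p n)) ` perms321 n \<subseteq> wex_pairs n"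
    using wex_pair_of_permutes by (auto simp: perms321_def)
qed

section \<open>Weak excedances read off a Motzkin path\<close>

definition flag_set :: "bool list \<Rightarrow> nat set" where
  "flag_set bs = {i \<in> {1..length bs}. bs ! (i - 1)}"

lemma flag_set_take: "{i \<in> flag_set bs. i \<le> k} = flag_set (take k bs)"
  by (auto simp: flag_set_def)

lemma card_flag_set: "card (flag_set bs) = length (filter id bs)"
proof (induction bs)
  case (Cons b bs)
  have "flag_set (b # bs) = (if b then {1} else {}) \<union> Suc ` flag_set bs"
  proof (rule set_eqI)
    fix i
    show "i \<in> flag_set (b # bs) \<longleftrightarrow> i \<in> (if b then {1} else {}) \<union> Suc ` flag_set bs"
      by (cases i) (auto simp: flag_set_def nth_Cons' inj_image_mem_iff[OF inj_Suc])
  qed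
  moreover have "Suc 0 \<notin> Suc ` flag_set bs" "finite (flag_set bs)" by (auto simp: flag_set_def)
  ultimately show ?case using Cons by (simp add: card_image)
qed (simp add: flag_set_def)

lemma flag_set_subset: "flag_set bs \<subseteq> {1..length bs}"
  by (auto simp: flag_set_def)

lemma flag_set_inj: "length bs = length cs \<Longrightarrow> flag_set bs = flag_set cs \<Longrightarrow> bs = cs"
proof (rule nth_equalityI)
  fix k assume "length bs = length cs" "flag_set bs = flag_set cs" "k < length bs"
  moreover have "Suc k \<in> flag_set bs \<longleftrightarrow> bs ! k" if "k < length bs" for bs :: "bool list"
    using that by (simp add: flag_set_def)
  ultimately show "bs ! k = cs ! k" by metis
qed

lemma flag_set_map_upt: "flag_set (map P [1..<Suc n]) = {i \<in> {1..n}. P i}"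
proof (rule set_eqI)
  fix i
  show "i \<in> flag_set (map P [1..<Suc n]) \<longleftrightarrow> i \<in> {i \<in> {1..n}. P i}"
  proof (cases "1 \<le> i \<and> i \<le> n")
    case True
    then have "map P [1..<Suc n] ! (i - 1) = P i" by (subst nth_map_upt) auto
    with True show ?thesis by (simp add: flag_set_def)
  qed (auto simp: flag_set_def)
qed

definition wex_position_flags :: "step list \<Rightarrow> bool list" where
  "wex_position_flags xs = True # map opens xs"

text \<open>Position 1 is always a weak excedance and value \<open>n\<close> always the value of one, whence the
  extra \<open>True\<close> entries.\<close>

definition wex_value_flags :: "step list \<Rightarrow> bool list" where
  "wex_value_flags xs = map closes xs @ [True]"

lemma motzkin_iff_wex_pairs:
  "motzkin 0 xs 0 \<longleftrightarrow>
     (flag_set (wex_position_flags xs), flag_set (wex_value_flags xs)) \<in> wex_pairs (Suc (length xs))"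
proof -
  have "card {v \<in> flag_set (wex_value_flags xs). v \<le> m} = length (filter closes (take m xs))"
    and "card {w \<in> flag_set (wex_position_flags xs). w \<le> Suc m} = Suc (length (filter opens (take m xs)))"
    if "m \<le> length xs" for m
    using that by (simp_all add: flag_set_take card_flag_set wex_value_flags_def
        wex_position_flags_def filter_map comp_def take_map)
  moreover have "card (flag_set (wex_position_flags xs)) = Suc (length (filter opens xs))"
    and "card (flag_set (wex_value_flags xs)) = Suc (length (filter closes xs))"
    by (simp_all add: card_flag_set wex_value_flags_def wex_position_flags_def filter_map comp_def)
  moreover have "flag_set (wex_position_flags xs) \<subseteq> {1..Suc (length xs)}"
    and "flag_set (wex_value_flags xs) \<subseteq> {1..Suc (length xs)}"
    using flag_set_subset[of "wex_position_flags xs"] flag_set_subset[of "wex_value_flags xs"]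
    by (simp_all add: wex_value_flags_def wex_position_flags_def)
  ultimately show ?thesis
    unfolding motzkin_iff_counts wex_pairs_def by (auto simp: less_Suc_eq_le)
qed

lemma step_eqI: "opens a = opens b \<Longrightarrow> closes a = closes b \<Longrightarrow> a = b"
  by (cases a; cases b) simp_all

lemma steps_eqI:
  assumes "map opens xs = map opens ys" "map closes xs = map closes ys"
  shows "xs = ys"
proof (rule nth_equalityI)
  show "length xs = length ys" using map_eq_imp_length_eq[OF assms(1)] .
  fix k assume "k < length xs"
  then show "xs ! k = ys ! k"
    using assms \<open>length xs = length ys\<close> by (intro step_eqI) (metis nth_map)+
qed

fun step_of :: "bool \<Rightarrow> bool \<Rightarrow> step" where
  "step_of True False = Up"
| "step_of False True = Down"
| "step_of True True = Level_both"
| "step_of False False = Level_none"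

lemma opens_step_of [simp]: "opens (step_of a b) = a"
  and closes_step_of [simp]: "closes (step_of a b) = b"
  by (cases a; cases b; simp)+

lemma wex_flag_sets_inj:
  assumes "length xs = length ys"
    and "flag_set (wex_position_flags xs) = flag_set (wex_position_flags ys)"
    and "flag_set (wex_value_flags xs) = flag_set (wex_value_flags ys)"
  shows "xs = ys"
proof (rule steps_eqI)
  have "wex_position_flags xs = wex_position_flags ys"
    using assms(1,2) by (intro flag_set_inj) (simp_all add: wex_position_flags_def)
  moreover have "wex_value_flags xs = wex_value_flags ys"
    using assms(1,3) by (intro flag_set_inj) (simp_all add: wex_value_flags_def)
  ultimately show "map opens xs = map opens ys" "map closes xs = map closes ys"
    by (simp_all add: wex_position_flags_def wex_value_flags_def)
qed

lemma wex_pair_flag_sets: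
  assumes WV: "(W, V) \<in> wex_pairs n" and "1 \<le> n"
  shows "\<exists>xs. length xs = n - 1 \<and>
    flag_set (wex_position_flags xs) = W \<and> flag_set (wex_value_flags xs) = V"
proof (intro exI conjI)
  define xs where "xs = map (\<lambda>k. step_of (Suc (Suc k) \<in> W) (Suc k \<in> V)) [0..<n - 1]"
  show "length xs = n - 1" by (simp add: xs_def)
  have sub: "W \<subseteq> {1..n}" "V \<subseteq> {1..n}" using WV by (auto simp: wex_pairs_def)
  have "wex_position_flags xs = map (\<lambda>i. i \<in> W) [1..<Suc n]"
    using wex_pairs_endpoints(1)[OF assms] \<open>1 \<le> n\<close>
    by (intro nth_equalityI) (auto simp: wex_position_flags_def xs_def nth_Cons' nth_map_upt simp del: upt_Suc)
  then show "flag_set (wex_position_flags xs) = W"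
    using sub by (simp only: flag_set_map_upt) auto
  have "[1..<n] = map Suc [0..<n - 1]" using \<open>1 \<le> n\<close> by (simp add: map_Suc_upt)
  then have "map closes xs = map (\<lambda>i. i \<in> V) [1..<n]" by (simp add: xs_def)
  then have "wex_value_flags xs = map (\<lambda>i. i \<in> V) [1..<Suc n]"
    using wex_pairs_endpoints(2)[OF assms] \<open>1 \<le> n\<close> by (simp add: wex_value_flags_def)
  then show "flag_set (wex_value_flags xs) = V"
    using sub by (simp only: flag_set_map_upt) auto
qed

lemma bij_betw_wex_flag_sets:
  assumes "1 \<le> n"
  shows "bij_betw (\<lambda>xs. (flag_set (wex_position_flags xs), flag_set (wex_value_flags xs)))
           {xs. length xs = n - 1 \<and> motzkin 0 xs 0} (wex_pairs n)"
proof (rule bij_betw_imageI)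
  show "inj_on (\<lambda>xs. (flag_set (wex_position_flags xs), flag_set (wex_value_flags xs)))
      {xs. length xs = n - 1 \<and> motzkin 0 xs 0}"
    using wex_flag_sets_inj by (auto intro: inj_onI)
  show "(\<lambda>xs. (flag_set (wex_position_flags xs), flag_set (wex_value_flags xs))) `
      {xs. length xs = n - 1 \<and> motzkin 0 xs 0} = wex_pairs n"
    using assms motzkin_iff_wex_pairs wex_pair_flag_sets by fastforce
qed

section \<open>Leaves as runs of weak excedances\<close>

fun true_pairs :: "bool list \<Rightarrow> nat" where
  "true_pairs (x # y # zs) = of_bool (x \<and> y) + true_pairs (y # zs)"
| "true_pairs _ = 0"

fun true_runs :: "bool list \<Rightarrow> nat" where
  "true_runs [] = 0"
| "true_runs [x] = of_bool x"
| "true_runs (x # y # zs) = of_bool (x \<and> \<not> y) + true_runs (y # zs)"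

lemma true_pairs_append:
  "true_pairs (xs @ y # ys) = true_pairs xs + true_pairs (y # ys) + of_bool (xs \<noteq> [] \<and> last xs \<and> y)"
proof (induction xs)
  case (Cons x xs) then show ?case by (cases xs) auto
qed simp

lemma true_runs_append:
  "true_runs (xs @ y # ys) + of_bool (xs \<noteq> [] \<and> last xs \<and> y) = true_runs xs + true_runs (y # ys)"
proof (induction xs)
  case (Cons x xs) then show ?case by (cases xs) auto
qed simp

lemma card_ge_split_first:
  fixes a :: nat
  assumes "finite {i. a \<le> i \<and> Q i}"
  shows "card {i. a \<le> i \<and> Q i} = of_bool (Q a) + card {i. Suc a \<le> i \<and> Q i}"
proof (cases "Q a")
  case True
  then have "{i. a \<le> i \<and> Q i} = insert a {i. Suc a \<le> i \<and> Q i}"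
    by (auto simp: order_le_less Suc_le_eq)
  moreover have "finite {i. Suc a \<le> i \<and> Q i}"
    using assms by (rule rev_finite_subset) auto
  ultimately show ?thesis using True by simp
next
  case False
  then have "{i. a \<le> i \<and> Q i} = {i. Suc a \<le> i \<and> Q i}"
    by (auto simp: order_le_less Suc_le_eq)
  then show ?thesis using False by simp
qed

lemma true_pairs_map_upt:
  "true_pairs (map P [a..<b]) = card {i. a \<le> i \<and> Suc i < b \<and> P i \<and> P (Suc i)}"
proof (induction "b - a" arbitrary: a)
  case 0
  then have "{i. a \<le> i \<and> Suc i < b \<and> P i \<and> P (Suc i)} = {}" by auto
  with 0 show ?case by (simp only: card.empty) simp
next
  case (Suc k)
  show ?case
  proof (cases "Suc a < b")
    case True
    have "finite {i. a \<le> i \<and> Suc i < b \<and> P i \<and> P (Suc i)}"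
      by (rule finite_subset[of _ "{..<b}"]) auto
    moreover have "map P [a..<b] = P a # P (Suc a) # map P [Suc (Suc a)..<b]"
      using True by (simp add: upt_conv_Cons)
    ultimately show ?thesis
      using Suc.hyps(1)[of "Suc a"] Suc.hyps(2) True
      by (simp add: card_ge_split_first[of a] upt_conv_Cons)
  next
    case False
    then have "{i. a \<le> i \<and> Suc i < b \<and> P i \<and> P (Suc i)} = {}" by auto
    moreover have "true_pairs (map P [a..<b]) = 0"
      using False by (cases "a < b") (auto simp: upt_conv_Cons)
    ultimately show ?thesis by (metis card.empty)
  qed
qed

lemma true_runs_map_upt:
  "true_runs (map P [a..<b]) = card {i. a \<le> i \<and> i < b \<and> P i \<and> (Suc i = b \<or> \<not> P (Suc i))}"
proof (induction "b - a" arbitrary: a)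
  case (Suc k)
  have "finite {i. a \<le> i \<and> i < b \<and> P i \<and> (Suc i = b \<or> \<not> P (Suc i))}"
    by (rule finite_subset[of _ "{..<b}"]) auto
  note split = card_ge_split_first[OF this]
  show ?case
  proof (cases "Suc a < b")
    case True
    then have "map P [a..<b] = P a # P (Suc a) # map P [Suc (Suc a)..<b]"
      by (simp add: upt_conv_Cons)
    then show ?thesis
      using Suc.hyps(1)[of "Suc a"] Suc.hyps(2) True split by (simp add: upt_conv_Cons)
  next
    case False
    then have "b = Suc a" using Suc.hyps(2) by simp
    then show ?thesis using split by simp
  qed
qed simp

lemma last_wex_position_flags_tree_word:
  "1 \<le> edges T \<Longrightarrow> last (wex_position_flags (tree_word T)) \<longleftrightarrow> children (hd (children T)) = []"
  by (cases T rule: tree_word.cases) (auto simp: wex_position_flags_def)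

lemma leaves_tree_word:
  "1 \<le> edges T \<Longrightarrow> young_leaves T = true_pairs (wex_position_flags (tree_word T)) \<and>
     old_leaves T = true_runs (wex_position_flags (tree_word T))"
proof (induction T rule: tree_word.induct)
  case (3 t ts)
  let ?x = "wex_position_flags (tree_word (Node (t # ts)))"
  have "last ?x \<longleftrightarrow> children t = []"
    using last_wex_position_flags_tree_word[of "Node (t # ts)"] by simp
  then show ?case
    using 3 true_pairs_append[of ?x True "[]"] true_runs_append[of ?x True "[]"]
    by (cases t) (auto simp: wex_position_flags_def)
next
  case (4 f fs)
  let ?x = "wex_position_flags (tree_word (Node (f # fs)))"
  show ?case
    using 4 true_pairs_append[of ?x False "[]"] true_runs_append[of ?x False "[]"]
    by (auto simp: wex_position_flags_def)
next
  case (5 f fs t ts)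
  let ?x = "wex_position_flags (tree_word (Node (t # ts)))"
  let ?y = "wex_position_flags (tree_word (Node (f # fs)))"
  have "last ?x \<longleftrightarrow> children t = []"
    using last_wex_position_flags_tree_word[of "Node (t # ts)"] by simp
  \<comment> \<open>The \<open>Up\<close> step supplies the leading \<open>True\<close> of \<open>?y\<close>.\<close>
  moreover have "wex_position_flags (tree_word (Node (Node (f # fs) # t # ts))) = ?x @ ?y @ [False]"
    by (simp add: wex_position_flags_def)
  ultimately show ?case
    using 5 true_pairs_append[of ?x True "tl ?y @ [False]"] true_runs_append[of ?x True "tl ?y @ [False]"]
      true_pairs_append[of ?y False "[]"] true_runs_append[of ?y False "[]"]
    by (cases t) (auto simp: wex_position_flags_def)
qed (auto simp: wex_position_flags_def)

section \<open>The bijection\<close>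

lemma map_weak_exc_eq_flags:
  assumes "wex_set p (length bs) = flag_set bs"
  shows "map (weak_exc p) [1..<Suc (length bs)] = bs"
proof (rule nth_equalityI)
  fix k assume "k < length (map (weak_exc p) [1..<Suc (length bs)])"
  then have "Suc k \<in> {1..length bs}" by (simp del: upt_Suc)
  then have "weak_exc p (Suc k) \<longleftrightarrow> Suc k \<in> flag_set bs"
    using assms by (auto simp: wex_set_def)
  then show "map (weak_exc p) [1..<Suc (length bs)] ! k = bs ! k"
    using \<open>Suc k \<in> {1..length bs}\<close> by (simp add: flag_set_def nth_map_upt del: upt_Suc)
qed (simp del: upt_Suc)

definition tree_perm :: "nat \<Rightarrow> ptree \<Rightarrow> nat \<Rightarrow> nat" where
  "tree_perm n T =
     perm_of_wex n (flag_set (wex_position_flags (tree_word T))) (flag_set (wex_value_flags (tree_word T)))"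

lemma bij_betw_tree_perm:
  assumes "1 \<le> n"
  shows "bij_betw (tree_perm n) {T. edges T = n} (perms321 n)"
proof -
  have "tree_perm n = (\<lambda>(W, V). perm_of_wex n W V) \<circ>
      (\<lambda>xs. (flag_set (wex_position_flags xs), flag_set (wex_value_flags xs))) \<circ> tree_word"
    by (rule ext) (simp add: tree_perm_def)
  then show ?thesis
    using bij_betw_trans[OF bij_betw_tree_word[OF assms]
        bij_betw_trans[OF bij_betw_wex_flag_sets[OF assms] bij_betw_perm_of_wex_pairs]] by simp
qed

lemma map_weak_exc_tree_perm:
  assumes "1 \<le> edges T"
  shows "map (weak_exc (tree_perm (edges T) T)) [1..<Suc (edges T)] = wex_position_flags (tree_word T)"
proof -
  let ?bs = "wex_position_flags (tree_word T)"
  have "motzkin 0 (tree_word T) 0" and len: "length ?bs = edges T"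
    using tree_word_motzkin assms by (auto simp: wex_position_flags_def)
  then have "wex_set (tree_perm (edges T) T) (length ?bs) = flag_set ?bs"
    using wex_set_perm_of_wex motzkin_iff_wex_pairs
    by (simp add: tree_perm_def wex_position_flags_def)
  then show ?thesis using map_weak_exc_eq_flags len by metis
qed

theorem mainTheorem10:
  fixes n :: nat
  assumes "n \<ge> 1"
  shows "\<exists>\<phi>. bij_betw \<phi> {T. edges T = n} (perms321 n) \<and>
    (\<forall>T. edges T = n \<longrightarrow>
       young_leaves T = card {i \<in> {1..n-1}. weak_exc (\<phi> T) i \<and> weak_exc (\<phi> T) (i+1)} \<and>
       old_leaves T = card {i \<in> {1..n}. weak_exc (\<phi> T) i \<and>
                                     (i = n \<or> \<not> weak_exc (\<phi> T) (i+1))})"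
proof (intro exI conjI allI impI)
  show "bij_betw (tree_perm n) {T. edges T = n} (perms321 n)"
    using bij_betw_tree_perm[OF assms] .
  fix T assume T: "edges T = n"
  let ?wex = "weak_exc (tree_perm n T)"
  have flags: "map ?wex [1..<Suc n] = wex_position_flags (tree_word T)"
    using map_weak_exc_tree_perm[of T] T assms by simp
  have "young_leaves T = true_pairs (map ?wex [1..<Suc n])"
    using leaves_tree_word T assms flags by simp
  also have "\<dots> = card {i \<in> {1..n-1}. ?wex i \<and> ?wex (i+1)}"
    unfolding true_pairs_map_upt by (rule arg_cong[where f = card]) auto
  finally show "young_leaves T = card {i \<in> {1..n-1}. ?wex i \<and> ?wex (i+1)}" .
  have "old_leaves T = true_runs (map ?wex [1..<Suc n])"
    using leaves_tree_word T assms flags by simp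
  also have "\<dots> = card {i \<in> {1..n}. ?wex i \<and> (i = n \<or> \<not> ?wex (i+1))}"
    unfolding true_runs_map_upt by (rule arg_cong[where f = card]) auto
  finally show "old_leaves T = card {i \<in> {1..n}. ?wex i \<and> (i = n \<or> \<not> ?wex (i+1))}" .
qed

end
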